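(* A set $\mathcal{E}\subseteq \mathcal{D}/d$ is closed in the metric space $(\mathcal{D}/d, d)$ if and only if the following condition holds: for every sequence $(A_i)_{i\in\mathbb{N}}$ in $\mathcal{E}$ such that the nets $\{\nu^+(\vee_{k=i}^j A_k): i,j\in\mathbb{N}, i\le j\}$ and $\{\nu^-(\vee_{k=i}^j A_k): i,j\in\mathbb{N}, i\le j\}$ converge to a common limit $L$, the net $\{\vee_{k=i}^j A_k : i,j\in\mathbb{N}, i\le j\}$ converges (in the metric $d$) to some $A\in\mathcal{E}$ with $\nu^+(A)=L$.
   Context: Here $\mathbb{N}=\{0,1,2,\dots\}$ and for $n\ge 1$, $n$ also denotes the set $\{0,1,\dots,n-1\}$. For $A\subseteq\mathbb{N}$, $\nu^+(A):=\limsup_{n\to\infty}|A\cap n|/n$, $\nu^-(A):=\liminf_{n\to\infty}|A\cap n|/n$, and $\mathcal{D}$ is the collection of $A\subseteq\mathbb{N}$ for which $\lim_{n\to\infty}|A\cap n|/n$ exists. Define $d(A,B):=\nu^+(A\triangle B)$ on $\mathcal{P}(\mathbb{N})$, and $[A]:=\{B\subseteq\mathbb{N}: d(A,B)=0\}$. Let $\mathcal{P}(\mathbb{N})/d:=\{[A]:A\subseteq\mathbb{N}\}$ and $\mathcal{D}/d:=\{[A]:A\in\mathcal{D}\}$, with metric $d([A],[B]):=d(A,B)$ and functions $\nu^\pm([A]):=\nu^\pm(A)$ (well defined). $\mathcal{P}(\mathbb{N})/d$ is partially ordered by $[A]\le[B]\iff \nu^+(A\setminus B)=0$, and $\vee$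 denotes the least upper bound in this order (so $\vee_{k=i}^j [A_k]=[\bigcup_{k=i}^j A_k]$). The index set $\{(i,j): i,j\in\mathbb{N}, i\le j\}$ is directed by the product order $(i,j)\le(k,l)\iff i\le k$ and $j\le l$. *)

theory Defs
  imports "HOL-Analysis.Analysis" "HOL-Library.Liminf_Limsup"
begin

definition dens_ratio :: "nat set \<Rightarrow> nat \<Rightarrow> real" where
  "dens_ratio A n = real (card (A \<inter> {..<n})) / real n"

text \<open>Upper and lower asymptotic density (values lie in [0,1], so the
 extended-real limsup/liminf are finite).\<close>
definition nu_plus :: "nat set \<Rightarrow> real" where
  "nu_plus A = real_of_ereal (limsup (\<lambda>n. ereal (dens_ratio A n)))"

definition nu_minus :: "nat set \<Rightarrow> real" where
  "nu_minus A = real_of_ereal (liminf (\<lambda>n. ereal (dens_ratio A n)))"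

definition Dens :: "nat set set" where
  "Dens = {A. convergent (dens_ratio A)}"

definition dd :: "nat set \<Rightarrow> nat set \<Rightarrow> real" where
  "dd A B = nu_plus ((A - B) \<union> (B - A))"

definition cls :: "nat set \<Rightarrow> nat set set" where
  "cls A = {B. dd A B = 0}"

definition Dquot :: "nat set set set" where
  "Dquot = cls ` Dens"

definition closed_Dd :: "nat set set set \<Rightarrow> bool" where
  "closed_Dd E \<longleftrightarrow>
     (\<forall>A \<in> Dens. (\<forall>e>0. \<exists>B. cls B \<in> E \<and> dd A B < e) \<longrightarrow> cls A \<in> E)"

text \<open>Convergence of a real net indexed by {(i,j). i \<le> j} with the product order.\<close>
definition net_tendsto :: "(nat \<Rightarrow> nat \<Rightarrow> real) \<Rightarrow> real \<Rightarrow> bool" where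
  "net_tendsto f L \<longleftrightarrow>
     (\<forall>e>0. \<exists>i0 j0. i0 \<le> j0 \<and>
        (\<forall>i j. i0 \<le> i \<longrightarrow> j0 \<le> j \<longrightarrow> i \<le> j \<longrightarrow> \<bar>f i j - L\<bar> < e))"

text \<open>Representative of the join of [A_i],...,[A_j].\<close>
definition Ujoin :: "(nat \<Rightarrow> nat set) \<Rightarrow> nat \<Rightarrow> nat \<Rightarrow> nat set" where
  "Ujoin A i j = (\<Union>k\<in>{i..j}. A k)"

end

theory Submission
  imports Defs
begin

text \<open>The pseudometric \<open>dd\<close> is complete: a rapidly Cauchy sequence \<open>C r\<close> has as limit the
  diagonal set that agrees with \<open>C r\<close> on the \<open>r\<close>-th of a sequence of very long blocks of \<open>\<nat>\<close>.
  If the upper and lower densities of the joins \<open>A i \<union> \<dots> \<union> A j\<close> converge to a common \<open>L\<close>,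
  then \<open>A i\<close> is nearly all of the join (a subset whose lower density nearly reaches the upper
  density of the superset is close to it), so \<open>(A i)\<close> is Cauchy; its limit has density \<open>L\<close>,
  hence lies in \<open>Dens\<close>, and is the limit of the joins. Conversely, for a point \<open>[A]\<close> adherent
  to \<open>E\<close>, the joins of approximations \<open>[B k] \<in> E\<close> with \<open>dd (B k) A < 2\<^sup>-\<^sup>k\<close> converge
  to \<open>A\<close>, and the condition returns a point of \<open>E\<close> at distance \<open>0\<close> from \<open>A\<close>.\<close>

lemma dens_ratio_nonneg: "0 \<le> dens_ratio X n"
  by (simp add: dens_ratio_def)

lemma dens_ratio_le_one: "dens_ratio X n \<le> 1"
proof (cases "n = 0")
  case False
  have "card (X \<inter> {..<n}) \<le> card {..<n}"
    by (rule card_mono) auto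
  then show ?thesis
    using False by (simp add: dens_ratio_def)
qed (simp add: dens_ratio_def)

lemma dens_ratio_mono: "X \<subseteq> Y \<Longrightarrow> dens_ratio X n \<le> dens_ratio Y n"
  unfolding dens_ratio_def by (rule divide_right_mono) (auto intro!: card_mono)

lemma dens_ratio_Un_le: "dens_ratio (X \<union> Y) n \<le> dens_ratio X n + dens_ratio Y n"
proof -
  have "card ((X \<union> Y) \<inter> {..<n}) \<le> card (X \<inter> {..<n}) + card (Y \<inter> {..<n})"
    by (metis Int_Un_distrib2 card_Un_le)
  then show ?thesis
    unfolding dens_ratio_def add_divide_distrib[symmetric]
    by (intro divide_right_mono) simp_all
qed

lemma dens_ratio_Diff:
  assumes "X \<subseteq> Y"
  shows "dens_ratio (Y - X) n = dens_ratio Y n - dens_ratio X n"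
proof -
  have "card ((Y - X) \<inter> {..<n}) = card (Y \<inter> {..<n}) - card (X \<inter> {..<n})"
    using assms by (metis Diff_Int_distrib2 Int_mono card_Diff_subset finite_Int finite_lessThan order_refl)
  moreover have "card (X \<inter> {..<n}) \<le> card (Y \<inter> {..<n})"
    using assms by (auto intro!: card_mono)
  ultimately show ?thesis
    unfolding dens_ratio_def by (simp add: diff_divide_distrib of_nat_diff)
qed

lemma Limsup_dens_ratio: "limsup (\<lambda>n. ereal (dens_ratio X n)) = ereal (nu_plus X)"
proof -
  have "0 \<le> limsup (\<lambda>n. ereal (dens_ratio X n))" "limsup (\<lambda>n. ereal (dens_ratio X n)) \<le> 1"
    by (auto intro!: le_Limsup Limsup_bounded simp: dens_ratio_nonneg dens_ratio_le_one)
  then show ?thesis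
    unfolding nu_plus_def by (intro ereal_real'[symmetric]) auto
qed

lemma Liminf_dens_ratio: "liminf (\<lambda>n. ereal (dens_ratio X n)) = ereal (nu_minus X)"
proof -
  have "0 \<le> liminf (\<lambda>n. ereal (dens_ratio X n))" "liminf (\<lambda>n. ereal (dens_ratio X n)) \<le> 1"
    by (auto intro!: Liminf_le Liminf_bounded simp: dens_ratio_nonneg dens_ratio_le_one)
  then show ?thesis
    unfolding nu_minus_def by (intro ereal_real'[symmetric]) auto
qed

lemma nu_plus_less_eventually:
  "nu_plus X < c \<Longrightarrow> eventually (\<lambda>n. dens_ratio X n < c) sequentially"
  using Limsup_lessD[where y="ereal c" and F=sequentially and f="\<lambda>n. ereal (dens_ratio X n)"]
  by (simp add: Limsup_dens_ratio)

lemma nu_minus_greater_eventually: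
  "c < nu_minus X \<Longrightarrow> eventually (\<lambda>n. c < dens_ratio X n) sequentially"
  using less_LiminfD[where y="ereal c" and F=sequentially and f="\<lambda>n. ereal (dens_ratio X n)"]
  by (simp add: Liminf_dens_ratio)

lemma nu_plus_le_of_eventually:
  assumes "\<And>e. e > 0 \<Longrightarrow> eventually (\<lambda>n. dens_ratio X n \<le> c + e) sequentially"
  shows "nu_plus X \<le> c"
proof (rule field_le_epsilon)
  fix e :: real
  assume "e > 0"
  then have "limsup (\<lambda>n. ereal (dens_ratio X n)) \<le> ereal (c + e)"
    using assms by (intro Limsup_bounded) simp
  then show "nu_plus X \<le> c + e"
    by (simp add: Limsup_dens_ratio)
qed

lemma nu_minus_ge_of_eventually:
  assumes "\<And>e. e > 0 \<Longrightarrow> eventually (\<lambda>n. c - e \<le> dens_ratio X n) sequentially"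
  shows "c \<le> nu_minus X"
proof (rule field_le_epsilon)
  fix e :: real
  assume "e > 0"
  then have "ereal (c - e) \<le> liminf (\<lambda>n. ereal (dens_ratio X n))"
    using assms by (intro Liminf_bounded) simp
  then show "c \<le> nu_minus X + e"
    by (simp add: Liminf_dens_ratio)
qed

lemma nu_plus_nonneg: "0 \<le> nu_plus X"
  using le_Limsup[of sequentially 0 "\<lambda>n. ereal (dens_ratio X n)"]
  by (simp add: dens_ratio_nonneg Limsup_dens_ratio)

lemma nu_plus_mono: "X \<subseteq> Y \<Longrightarrow> nu_plus X \<le> nu_plus Y"
  using Limsup_mono[of "\<lambda>n. ereal (dens_ratio X n)" "\<lambda>n. ereal (dens_ratio Y n)" sequentially]
  by (simp add: dens_ratio_mono Limsup_dens_ratio)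

lemma nu_plus_Un_le: "nu_plus (X \<union> Y) \<le> nu_plus X + nu_plus Y"
proof (rule nu_plus_le_of_eventually)
  fix e :: real
  assume "e > 0"
  then have "eventually (\<lambda>n. dens_ratio X n < nu_plus X + e/2) sequentially"
    "eventually (\<lambda>n. dens_ratio Y n < nu_plus Y + e/2) sequentially"
    by (simp_all add: nu_plus_less_eventually)
  then show "eventually (\<lambda>n. dens_ratio (X \<union> Y) n \<le> nu_plus X + nu_plus Y + e) sequentially"
    proof eventually_elim
    case (elim n)
    then show ?case
      using dens_ratio_Un_le[of X Y n] by linarith
  qed
qed

lemma Dens_iff_nu_minus_eq_nu_plus: "A \<in> Dens \<longleftrightarrow> nu_minus A = nu_plus A"
proof
  assume "A \<in> Dens"
  then obtain l where "dens_ratio A \<longlonglongrightarrow> l"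
    by (auto simp: Dens_def convergent_def)
  then have "(\<lambda>n. ereal (dens_ratio A n)) \<longlonglongrightarrow> ereal l"
    by (rule tendsto_ereal)
  then have "liminf (\<lambda>n. ereal (dens_ratio A n)) = ereal l"
    and "limsup (\<lambda>n. ereal (dens_ratio A n)) = ereal l"
    by (simp_all add: lim_imp_Liminf lim_imp_Limsup)
  then show "nu_minus A = nu_plus A"
    by (simp add: Limsup_dens_ratio Liminf_dens_ratio)
next
  assume eq: "nu_minus A = nu_plus A"
  have "dens_ratio A \<longlonglongrightarrow> nu_plus A"
  proof (rule tendstoI)
    fix e :: real
    assume "e > 0"
    then have "eventually (\<lambda>n. dens_ratio A n < nu_plus A + e) sequentially"
      "eventually (\<lambda>n. nu_plus A - e < dens_ratio A n) sequentially"
      using eq by (simp_all add: nu_plus_less_eventually nu_minus_greater_eventually)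
    then show "eventually (\<lambda>n. dist (dens_ratio A n) (nu_plus A) < e) sequentially"
      by eventually_elim (simp add: dist_real_def abs_less_iff)
  qed
  then show "A \<in> Dens"
    by (auto simp: Dens_def convergent_def)
qed

lemma dd_nonneg: "0 \<le> dd X Y"
  by (simp add: dd_def nu_plus_nonneg)

lemma dd_sym: "dd X Y = dd Y X"
  by (simp add: dd_def Un_commute)

lemma dd_triangle: "dd X Z \<le> dd X Y + dd Y Z"
proof -
  have "dd X Z \<le> nu_plus (((X - Y) \<union> (Y - X)) \<union> ((Y - Z) \<union> (Z - Y)))"
    unfolding dd_def by (rule nu_plus_mono) auto
  also have "\<dots> \<le> dd X Y + dd Y Z"
    unfolding dd_def by (rule nu_plus_Un_le)
  finally show ?thesis .
qed

lemma dd_Un_le: "dd (X \<union> Y) Z \<le> dd X Z + dd Y Z"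
proof -
  have "dd (X \<union> Y) Z \<le> nu_plus (((X - Z) \<union> (Z - X)) \<union> ((Y - Z) \<union> (Z - Y)))"
    unfolding dd_def by (rule nu_plus_mono) auto
  also have "\<dots> \<le> dd X Z + dd Y Z"
    unfolding dd_def by (rule nu_plus_Un_le)
  finally show ?thesis .
qed

lemma abs_nu_plus_diff_le_dd: "\<bar>nu_plus X - nu_plus Y\<bar> \<le> dd X Y"
proof -
  have "nu_plus X \<le> nu_plus Y + dd X Y" for X Y
  proof -
    have "nu_plus X \<le> nu_plus (Y \<union> ((X - Y) \<union> (Y - X)))"
      by (rule nu_plus_mono) auto
    also have "\<dots> \<le> nu_plus Y + dd X Y"
      unfolding dd_def by (rule nu_plus_Un_le)
    finally show ?thesis .
  qed
  then show ?thesis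
    using dd_sym[of X Y] by (smt (verit))
qed

lemma abs_nu_minus_diff_le_dd: "\<bar>nu_minus X - nu_minus Y\<bar> \<le> dd X Y"
proof -
  have "nu_minus Y - dd X Y \<le> nu_minus X" for X Y
  proof (rule nu_minus_ge_of_eventually)
    fix e :: real
    assume "e > 0"
    then have "eventually (\<lambda>n. nu_minus Y - e/2 < dens_ratio Y n) sequentially"
      "eventually (\<lambda>n. dens_ratio ((X - Y) \<union> (Y - X)) n < dd X Y + e/2) sequentially"
      unfolding dd_def by (simp_all add: nu_plus_less_eventually nu_minus_greater_eventually)
    then show "eventually (\<lambda>n. nu_minus Y - dd X Y - e \<le> dens_ratio X n) sequentially"
    proof eventually_elim
      case (elim n)
      have "dens_ratio Y n \<le> dens_ratio (X \<union> ((X - Y) \<union> (Y - X))) n"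
        by (rule dens_ratio_mono) auto
      also have "\<dots> \<le> dens_ratio X n + dens_ratio ((X - Y) \<union> (Y - X)) n"
        by (rule dens_ratio_Un_le)
      finally show ?case
        using elim by linarith
    qed
  qed
  then show ?thesis
    using dd_sym[of X Y] by (smt (verit))
qed

lemma dd_subset_le:
  assumes "X \<subseteq> U"
  shows "dd X U \<le> nu_plus U - nu_minus X"
proof -
  have "(X - U) \<union> (U - X) = U - X"
    using assms by auto
  moreover have "nu_plus (U - X) \<le> nu_plus U - nu_minus X"
  proof (rule nu_plus_le_of_eventually)
    fix e :: real
    assume "e > 0"
    then have "eventually (\<lambda>n. dens_ratio U n < nu_plus U + e/2) sequentially"
      "eventually (\<lambda>n. nu_minus X - e/2 < dens_ratio X n) sequentially"
      by (simp_all add: nu_plus_less_eventually nu_minus_greater_eventually)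
    then show "eventually (\<lambda>n. dens_ratio (U - X) n \<le> nu_plus U - nu_minus X + e) sequentially"
    proof eventually_elim
      case (elim n)
      then show ?case
        using dens_ratio_Diff[OF assms, of n] by linarith
    qed
  qed
  ultimately show ?thesis
    by (simp add: dd_def)
qed

lemma cls_eqI: "dd A B = 0 \<Longrightarrow> cls A = cls B"
  unfolding cls_def using dd_triangle dd_sym dd_nonneg by (smt (verit) Collect_cong)

lemma dd_UN_le:
  assumes "finite I" "I \<noteq> {}"
  shows "dd (\<Union>k\<in>I. X k) Z \<le> (\<Sum>k\<in>I. dd (X k) Z)"
  using assms
proof (induction I rule: finite_ne_induct)
  case (insert k I)
  then show ?case
    using dd_Un_le[of "X k" "\<Union>k\<in>I. X k" Z] by simp
qed simp

lemma card_le_of_nu_plus_less: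
  assumes "nu_plus X < c"
  obtains M where "\<And>n. M \<le> n \<Longrightarrow> real (card (X \<inter> {..<n})) \<le> c * real n"
proof -
  obtain M where M: "\<And>n. M \<le> n \<Longrightarrow> dens_ratio X n < c"
    using nu_plus_less_eventually[OF assms] by (auto simp: eventually_sequentially)
  have "real (card (X \<inter> {..<n})) \<le> c * real n" if "M \<le> n" for n
    using M[OF that] by (cases "n = 0") (simp_all add: dens_ratio_def divide_less_eq)
  then show ?thesis
    using that by blast
qed

lemma nu_plus_le_of_card_le:
  assumes "\<And>n. real (card (X \<inter> {..<n})) \<le> a + c * real n"
  shows "nu_plus X \<le> c"
proof (rule nu_plus_le_of_eventually)
  fix e :: real
  assume "e > 0"
  obtain m :: nat where m: "a / e < m"
    using reals_Archimedean2 by blast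
  have "dens_ratio X n \<le> c + e" if "m < n" for n
  proof -
    have "a < e * real m"
      using m \<open>e > 0\<close> by (simp add: pos_divide_less_eq mult.commute)
    also have "\<dots> < e * real n"
      using that \<open>e > 0\<close> by simp
    finally have "a < e * real n" .
    then have "real (card (X \<inter> {..<n})) \<le> (c + e) * real n"
      using assms[of n] by (simp add: algebra_simps)
    then show ?thesis
      using that by (simp add: dens_ratio_def divide_le_eq)
  qed
  then show "eventually (\<lambda>n. dens_ratio X n \<le> c + e) sequentially"
    unfolding eventually_sequentially by (meson Suc_le_eq)
qed

lemma sum_half_powers_le: "(\<Sum>r\<in>{k..<m}. (1/2::real) ^ r) \<le> 2 * (1/2) ^ k"
proof (cases "k \<le> m")
  case True
  then have "(\<Sum>r\<in>{k..<m}. (1/2::real) ^ r) = 2 * (1/2) ^ k - 2 * (1/2) ^ m"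
    using True by (induction m rule: dec_induct) (simp_all add: sum.atLeastLessThan_Suc)
  then show ?thesis
    by simp
qed simp

lemma diagonal_symdiff_subset:
  fixes C :: "nat \<Rightarrow> nat set"
  assumes "mono K" and "\<And>x. m \<le> x \<Longrightarrow> k \<le> K x"
  shows "sym_diff (C k) {x. x \<in> C (K x)} \<inter> {..<n} \<subseteq>
    {..<m} \<union> (\<Union>r\<in>{k..<K n}. sym_diff (C r) (C (Suc r)) \<inter> {..<n})"
proof
  fix x
  assume x: "x \<in> sym_diff (C k) {x. x \<in> C (K x)} \<inter> {..<n}"
  show "x \<in> {..<m} \<union> (\<Union>r\<in>{k..<K n}. sym_diff (C r) (C (Suc r)) \<inter> {..<n})"
  proof (cases "x < m")
    case False
    then have "k \<le> K x"
      using assms(2) by simp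
    have "K x \<le> K n"
      using x \<open>mono K\<close> by (simp add: monoD)
    have telescope: "\<exists>r\<in>{k..<q}. x \<in> sym_diff (C r) (C (Suc r))"
      if "k \<le> q" "(x \<in> C q) \<noteq> (x \<in> C k)" for q
      using that
    proof (induction q rule: dec_induct)
      case (step q)
      show ?case
      proof (cases "x \<in> sym_diff (C q) (C (Suc q))")
        case True
        then show ?thesis
          using step.hyps by auto
      next
        case False
        then have "(x \<in> C q) \<noteq> (x \<in> C k)"
          using step.prems by blast
        then obtain r where "r \<in> {k..<q}" "x \<in> sym_diff (C r) (C (Suc r))"
          using step.IH by blast
        then show ?thesis
          by (intro bexI[of _ r]) auto
      qed
    qed simp
    have "(x \<in> C (K x)) \<noteq> (x \<in> C k)"
      using x by auto
    then obtain r where r: "r \<in> {k..<K x}" "x \<in> sym_diff (C r) (C (Suc r))"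
      using telescope[OF \<open>k \<le> K x\<close>] by blast
    then have "r \<in> {k..<K n}"
      using \<open>K x \<le> K n\<close> by simp
    then show ?thesis
      using r(2) x by blast
  qed simp
qed

lemma obtain_slow_index:
  fixes M :: "nat \<Rightarrow> nat"
  obtains K :: "nat \<Rightarrow> nat"
  where "mono K" "filterlim K at_top sequentially" "\<And>r n. r < K n \<Longrightarrow> M r \<le> n"
proof -
  define N where "N = rec_nat 0 (\<lambda>r x. max (Suc x) (M r))"
  have N_0: "N 0 = 0" and N_Suc: "N (Suc r) = max (Suc (N r)) (M r)" for r
    by (simp_all add: N_def)
  have "strict_mono N"
    unfolding strict_mono_Suc_iff by (simp add: N_Suc less_max_iff_disj)
  then have "mono N" and N_ge: "r \<le> N r" for r
    by (simp_all add: strict_mono_mono seq_suble)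
  define K where "K n = Max {q. N q \<le> n}" for n
  have fin: "finite {q. N q \<le> n}" for n
    by (rule finite_subset[of _ "{..n}"]) (auto intro: le_trans[OF N_ge])
  have N_K: "N (K n) \<le> n" for n
  proof -
    have "0 \<in> {q. N q \<le> n}"
      using N_0 by simp
    then show ?thesis
      using Max_in[OF fin[of n]] unfolding K_def by auto
  qed
  have K_ge: "N q \<le> n \<Longrightarrow> q \<le> K n" for q n
    unfolding K_def using fin by (simp add: Max_ge)
  show ?thesis
  proof
    show "mono K"
      by (rule monoI) (use N_K K_ge order_trans in blast)
    show "filterlim K at_top sequentially"
      unfolding filterlim_at_top eventually_sequentially by (use K_ge in blast)
    show "M r \<le> n" if "r < K n" for r n
    proof -
      have "N (Suc r) \<le> N (K n)"
        using that \<open>mono N\<close> by (simp add: monoD)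
      then show ?thesis
        using N_K[of n] N_Suc[of r] by simp
    qed
  qed
qed

lemma dd_limit_of_fast_Cauchy:
  fixes C :: "nat \<Rightarrow> nat set"
  assumes fast: "\<And>r. dd (C r) (C (Suc r)) < (1/2) ^ r"
  obtains B where "\<And>k. dd (C k) B \<le> 2 * (1/2) ^ k"
proof -
  have "\<exists>M. \<forall>n. M \<le> n \<longrightarrow> real (card (sym_diff (C r) (C (Suc r)) \<inter> {..<n})) \<le> (1/2) ^ r * real n"
    for r
    using card_le_of_nu_plus_less fast[of r] unfolding dd_def by metis
  then obtain M where M:
    "\<And>r n. M r \<le> n \<Longrightarrow> real (card (sym_diff (C r) (C (Suc r)) \<inter> {..<n})) \<le> (1/2) ^ r * real n"
    by metis
  obtain K where "mono K" and K_top: "filterlim K at_top sequentially"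
    and K_M: "\<And>r n. r < K n \<Longrightarrow> M r \<le> n"
    using obtain_slow_index[of M] by blast
  define B where "B = {x. x \<in> C (K x)}"
  have "dd (C k) B \<le> 2 * (1/2) ^ k" for k
  proof -
    obtain m where m: "\<And>x. m \<le> x \<Longrightarrow> k \<le> K x"
      using K_top unfolding filterlim_at_top eventually_sequentially by blast
    have "real (card (sym_diff (C k) B \<inter> {..<n})) \<le> real m + 2 * (1/2) ^ k * real n" for n
    proof -
      let ?S = "\<lambda>r. sym_diff (C r) (C (Suc r)) \<inter> {..<n}"
      have "card (sym_diff (C k) B \<inter> {..<n}) \<le> card ({..<m} \<union> (\<Union>r\<in>{k..<K n}. ?S r))"
        unfolding B_def by (intro card_mono diagonal_symdiff_subset \<open>mono K\<close> m) simp_all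
      also have "\<dots> \<le> m + card (\<Union>r\<in>{k..<K n}. ?S r)"
        using card_Un_le[of "{..<m}"] by simp
      also have "\<dots> \<le> m + (\<Sum>r\<in>{k..<K n}. card (?S r))"
        using card_UN_le[of "{k..<K n}" ?S] by simp
      finally have "real (card (sym_diff (C k) B \<inter> {..<n})) \<le> real m + (\<Sum>r\<in>{k..<K n}. real (card (?S r)))"
        unfolding of_nat_sum[symmetric] of_nat_add[symmetric] of_nat_le_iff .
      also have "\<dots> \<le> real m + (\<Sum>r\<in>{k..<K n}. (1/2) ^ r * real n)"
        using M K_M by (intro add_left_mono sum_mono) simp
      also have "\<dots> \<le> real m + 2 * (1/2) ^ k * real n"
        unfolding sum_distrib_right[symmetric]
        by (intro add_left_mono mult_right_mono sum_half_powers_le) simp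
      finally show ?thesis .
    qed
    then show ?thesis
      unfolding dd_def by (rule nu_plus_le_of_card_le)
  qed
  then show ?thesis
    using that by blast
qed

lemma dd_Cauchy_limit:
  fixes C :: "nat \<Rightarrow> nat set"
  assumes Cauchy: "\<And>e. e > 0 \<Longrightarrow> \<exists>M. \<forall>m\<ge>M. \<forall>n\<ge>M. dd (C m) (C n) < e"
  obtains B where "(\<lambda>n. dd (C n) B) \<longlonglongrightarrow> 0"
proof -
  obtain T where T: "\<And>r m n. T r \<le> m \<Longrightarrow> T r \<le> n \<Longrightarrow> dd (C m) (C n) < (1/2) ^ r"
    using Cauchy[of "(1/2) ^ _"] by (metis zero_less_divide_1_iff zero_less_numeral zero_less_power)
  define \<phi> where "\<phi> r = (\<Sum>s\<le>r. T s)" for r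
  have T_le_\<phi>: "T r \<le> \<phi> r" "T r \<le> \<phi> (Suc r)" for r
    unfolding \<phi>_def by (simp_all del: sum.atMost_Suc add: member_le_sum)
  obtain B where B: "\<And>k. dd (C (\<phi> k)) B \<le> 2 * (1/2) ^ k"
    using dd_limit_of_fast_Cauchy[of "C \<circ> \<phi>"] T T_le_\<phi> by auto
  have "\<forall>\<^sub>F n in sequentially. dd (C n) B < e" if "e > 0" for e
  proof -
    obtain k where k: "(1/2::real) ^ k < e / 3"
      using real_arch_pow_inv[of "e / 3" "1/2"] \<open>e > 0\<close> by auto
    have "dd (C n) B < e" if "T k \<le> n" for n
      using dd_triangle[of "C n" B "C (\<phi> k)"] T[OF that T_le_\<phi>(1)] B[of k] k by linarith
    then show ?thesis
      unfolding eventually_sequentially by blast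
  qed
  then have "(\<lambda>n. dd (C n) B) \<longlonglongrightarrow> 0"
    by (intro tendstoI) (simp add: dist_real_def dd_nonneg)
  then show ?thesis
    using that by blast
qed

lemma tendsto_nu_plus_of_dd:
  assumes "(\<lambda>n. dd (X n) Y) \<longlonglongrightarrow> 0"
  shows "(\<lambda>n. nu_plus (X n)) \<longlonglongrightarrow> nu_plus Y"
proof -
  have "(\<lambda>n. nu_plus (X n) - nu_plus Y) \<longlonglongrightarrow> 0"
    by (rule Lim_null_comparison[OF always_eventually assms]) (simp add: abs_nu_plus_diff_le_dd)
  then show ?thesis
    by (rule LIM_zero_cancel)
qed

lemma tendsto_nu_minus_of_dd:
  assumes "(\<lambda>n. dd (X n) Y) \<longlonglongrightarrow> 0"
  shows "(\<lambda>n. nu_minus (X n)) \<longlonglongrightarrow> nu_minus Y"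
proof -
  have "(\<lambda>n. nu_minus (X n) - nu_minus Y) \<longlonglongrightarrow> 0"
    by (rule Lim_null_comparison[OF always_eventually assms]) (simp add: abs_nu_minus_diff_le_dd)
  then show ?thesis
    by (rule LIM_zero_cancel)
qed

text \<open>On pairs \<open>i \<le> j\<close> the product order lets the threshold for \<open>j\<close> be absorbed into that for \<open>i\<close>.\<close>
lemma net_tendsto_iff:
  "net_tendsto f L \<longleftrightarrow> (\<forall>e>0. \<exists>M. \<forall>i j. M \<le> i \<longrightarrow> i \<le> j \<longrightarrow> \<bar>f i j - L\<bar> < e)"
  unfolding net_tendsto_def
proof (intro iffI allI impI)
  fix e :: real
  assume "\<forall>e>0. \<exists>i0 j0. i0 \<le> j0 \<and> (\<forall>i j. i0 \<le> i \<longrightarrow> j0 \<le> j \<longrightarrow> i \<le> j \<longrightarrow> \<bar>f i j - L\<bar> < e)"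
    and "e > 0"
  then obtain i0 j0 where "\<And>i j. i0 \<le> i \<Longrightarrow> j0 \<le> j \<Longrightarrow> i \<le> j \<Longrightarrow> \<bar>f i j - L\<bar> < e"
    by blast
  then show "\<exists>M. \<forall>i j. M \<le> i \<longrightarrow> i \<le> j \<longrightarrow> \<bar>f i j - L\<bar> < e"
    by (intro exI[of _ "max i0 j0"]) auto
next
  fix e :: real
  assume "\<forall>e>0. \<exists>M. \<forall>i j. M \<le> i \<longrightarrow> i \<le> j \<longrightarrow> \<bar>f i j - L\<bar> < e" and "e > 0"
  then obtain M where "\<forall>i j. M \<le> i \<longrightarrow> i \<le> j \<longrightarrow> \<bar>f i j - L\<bar> < e"
    by blast
  then show "\<exists>i0 j0. i0 \<le> j0 \<and> (\<forall>i j. i0 \<le> i \<longrightarrow> j0 \<le> j \<longrightarrow> i \<le> j \<longrightarrow> \<bar>f i j - L\<bar> < e)"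
    by blast
qed

lemma net_tendsto_diagonal: "net_tendsto f L \<Longrightarrow> (\<lambda>n. f n n) \<longlonglongrightarrow> L"
  unfolding net_tendsto_iff LIMSEQ_def dist_real_def by blast

lemma net_tendsto_by_row_bound:
  assumes "\<And>i j. i \<le> j \<Longrightarrow> \<bar>f i j - L\<bar> \<le> g i" and "g \<longlonglongrightarrow> 0"
  shows "net_tendsto f L"
  unfolding net_tendsto_iff
proof (intro allI impI)
  fix e :: real
  assume "e > 0"
  then obtain M where "\<And>i. M \<le> i \<Longrightarrow> \<bar>g i\<bar> < e"
    using \<open>g \<longlonglongrightarrow> 0\<close> unfolding LIMSEQ_def dist_real_def by auto
  then show "\<exists>M. \<forall>i j. M \<le> i \<longrightarrow> i \<le> j \<longrightarrow> \<bar>f i j - L\<bar> < e"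
    using assms(1) by (meson abs_ge_self le_less_trans)
qed

lemma net_tendsto_dd_unique:
  assumes "net_tendsto (\<lambda>i j. dd (X i j) A) 0" and "net_tendsto (\<lambda>i j. dd (X i j) B) 0"
  shows "dd A B = 0"
proof -
  have "(\<lambda>n. dd (X n n) A + dd (X n n) B) \<longlonglongrightarrow> 0"
    using tendsto_add[OF assms[THEN net_tendsto_diagonal]] by simp
  moreover have "dd A B \<le> dd (X n n) A + dd (X n n) B" for n
    using dd_triangle[of A B "X n n"] dd_sym[of A] by simp
  ultimately have "dd A B \<le> 0"
    by (intro LIMSEQ_le_const) auto
  then show ?thesis
    using dd_nonneg[of A B] by simp
qed

lemma Ujoin_self: "Ujoin A i i = A i"
  by (simp add: Ujoin_def)

text \<open>Both distances are bounded by \<open>dd_subset_le\<close>, using \<open>A i = Ujoin A i i\<close> to control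
  \<open>nu_minus (A i)\<close> and \<open>nu_minus (A j)\<close> by the lower-density net.\<close>
lemma dd_Ujoin_eventually_small:
  assumes plus: "net_tendsto (\<lambda>i j. nu_plus (Ujoin A i j)) L"
    and minus: "net_tendsto (\<lambda>i j. nu_minus (Ujoin A i j)) L" and "e > 0"
  obtains M where "\<And>i j. M \<le> i \<Longrightarrow> i \<le> j \<Longrightarrow> dd (A i) (Ujoin A i j) < e \<and> dd (A j) (Ujoin A i j) < e"
proof -
  obtain M1 where M1: "\<And>i j. M1 \<le> i \<Longrightarrow> i \<le> j \<Longrightarrow> \<bar>nu_plus (Ujoin A i j) - L\<bar> < e/2"
    using plus \<open>e > 0\<close> unfolding net_tendsto_iff by (meson half_gt_zero)
  obtain M2 where M2: "\<And>i j. M2 \<le> i \<Longrightarrow> i \<le> j \<Longrightarrow> \<bar>nu_minus (Ujoin A i j) - L\<bar> < e/2"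
    using minus \<open>e > 0\<close> unfolding net_tendsto_iff by (meson half_gt_zero)
  have "dd (A i) (Ujoin A i j) < e \<and> dd (A j) (Ujoin A i j) < e" if "max M1 M2 \<le> i" "i \<le> j" for i j
  proof -
    have "A i \<subseteq> Ujoin A i j" "A j \<subseteq> Ujoin A i j"
      using \<open>i \<le> j\<close> by (auto simp: Ujoin_def)
    then have "dd (A i) (Ujoin A i j) \<le> nu_plus (Ujoin A i j) - nu_minus (A i)"
      "dd (A j) (Ujoin A i j) \<le> nu_plus (Ujoin A i j) - nu_minus (A j)"
      by (simp_all add: dd_subset_le)
    moreover have "\<bar>nu_minus (A i) - L\<bar> < e/2" "\<bar>nu_minus (A j) - L\<bar> < e/2"
      using M2[of i i] M2[of j j] that by (simp_all add: Ujoin_self)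
    moreover have "\<bar>nu_plus (Ujoin A i j) - L\<bar> < e/2"
      using M1[of i j] that by simp
    ultimately show ?thesis
      by linarith
  qed
  then show ?thesis
    using that by blast
qed

lemma closed_imp_Ujoin_limit:
  assumes closed: "closed_Dd E" and AE: "\<And>i. cls (A i) \<in> E"
    and plus: "net_tendsto (\<lambda>i j. nu_plus (Ujoin A i j)) L"
    and minus: "net_tendsto (\<lambda>i j. nu_minus (Ujoin A i j)) L"
  shows "\<exists>B. cls B \<in> E \<and> nu_plus B = L \<and> net_tendsto (\<lambda>i j. dd (Ujoin A i j) B) 0"
proof -
  have "\<exists>M. \<forall>m\<ge>M. \<forall>n\<ge>M. dd (A m) (A n) < e" if "e > 0" for e
  proof -
    obtain M where M: "\<And>i j. M \<le> i \<Longrightarrow> i \<le> j \<Longrightarrow> dd (A i) (Ujoin A i j) < e/2 \<and> dd (A j) (Ujoin A i j) < e/2"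
      using dd_Ujoin_eventually_small[OF plus minus, of "e/2"] \<open>e > 0\<close> by auto
    have "dd (A i) (A j) < e" if "M \<le> i" "i \<le> j" for i j
      using M[OF that] dd_triangle[of "A i" "A j" "Ujoin A i j"] dd_sym[of "Ujoin A i j" "A j"] by linarith
    then show ?thesis
      by (metis dd_sym linorder_le_cases)
  qed
  then obtain B where AB: "(\<lambda>n. dd (A n) B) \<longlonglongrightarrow> 0"
    using dd_Cauchy_limit by blast
  have "(\<lambda>n. nu_plus (A n)) \<longlonglongrightarrow> L" "(\<lambda>n. nu_minus (A n)) \<longlonglongrightarrow> L"
    using plus[THEN net_tendsto_diagonal] minus[THEN net_tendsto_diagonal] by (simp_all add: Ujoin_self)
  then have plus_B: "nu_plus B = L" and minus_B: "nu_minus B = L"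
    using tendsto_nu_plus_of_dd[OF AB] tendsto_nu_minus_of_dd[OF AB] by (auto intro: LIMSEQ_unique)
  have "\<forall>e>0. \<exists>B'. cls B' \<in> E \<and> dd B B' < e"
  proof (intro allI impI)
    fix e :: real
    assume "e > 0"
    then obtain n where "dd (A n) B < e"
      using AB unfolding LIMSEQ_def dist_real_def by (metis abs_less_iff diff_zero order_refl)
    then show "\<exists>B'. cls B' \<in> E \<and> dd B B' < e"
      using AE dd_sym by metis
  qed
  moreover have "B \<in> Dens"
    by (simp add: Dens_iff_nu_minus_eq_nu_plus plus_B minus_B)
  ultimately have "cls B \<in> E"
    using closed unfolding closed_Dd_def by blast
  moreover have "net_tendsto (\<lambda>i j. dd (Ujoin A i j) B) 0"
    unfolding net_tendsto_iff
  proof (intro allI impI)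
    fix e :: real
    assume "e > 0"
    obtain M1 where M1: "\<And>i j. M1 \<le> i \<Longrightarrow> i \<le> j \<Longrightarrow> dd (A i) (Ujoin A i j) < e/2"
      using dd_Ujoin_eventually_small[OF plus minus, of "e/2"] \<open>e > 0\<close> by (metis half_gt_zero)
    obtain M2 where M2: "\<And>i. M2 \<le> i \<Longrightarrow> dd (A i) B < e/2"
      using AB \<open>e > 0\<close> unfolding LIMSEQ_def dist_real_def by (metis abs_less_iff diff_zero half_gt_zero)
    have "\<bar>dd (Ujoin A i j) B - 0\<bar> < e" if "max M1 M2 \<le> i" "i \<le> j" for i j
    proof -
      have "dd (A i) (Ujoin A i j) < e/2" "dd (A i) B < e/2"
        using M1[of i j] M2[of i] that by simp_all
      moreover have "dd (Ujoin A i j) B \<le> dd (A i) (Ujoin A i j) + dd (A i) B"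
        using dd_triangle[of "Ujoin A i j" B "A i"] dd_sym[of "A i" "Ujoin A i j"] by simp
      ultimately show ?thesis
        using dd_nonneg[of "Ujoin A i j" B] by simp
    qed
    then show "\<exists>M. \<forall>i j. M \<le> i \<longrightarrow> i \<le> j \<longrightarrow> \<bar>dd (Ujoin A i j) B - 0\<bar> < e"
      by blast
  qed
  ultimately show ?thesis
    using plus_B by blast
qed

lemma Ujoin_limit_imp_closed:
  assumes limit: "\<And>A L. (\<forall>i. cls (A i) \<in> E) \<Longrightarrow>
      net_tendsto (\<lambda>i j. nu_plus (Ujoin A i j)) L \<Longrightarrow>
      net_tendsto (\<lambda>i j. nu_minus (Ujoin A i j)) L \<Longrightarrow>
      \<exists>B. cls B \<in> E \<and> net_tendsto (\<lambda>i j. dd (Ujoin A i j) B) 0"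
  shows "closed_Dd E"
  unfolding closed_Dd_def
proof (intro ballI impI)
  fix A
  assume "A \<in> Dens" and adherent: "\<forall>e>0. \<exists>B. cls B \<in> E \<and> dd A B < e"
  have "\<forall>k. \<exists>B. cls B \<in> E \<and> dd B A < (1/2) ^ k"
    using adherent dd_sym by simp
  then obtain B where BE: "\<And>k. cls (B k) \<in> E" and B_near: "\<And>k. dd (B k) A < (1/2) ^ k"
    by metis
  have row_bound: "dd (Ujoin B i j) A \<le> 2 * (1/2) ^ i" if "i \<le> j" for i j
  proof -
    have "dd (Ujoin B i j) A \<le> (\<Sum>k\<in>{i..<Suc j}. dd (B k) A)"
      unfolding Ujoin_def atLeastLessThanSuc_atLeastAtMost using that by (intro dd_UN_le) auto
    also have "\<dots> \<le> (\<Sum>k\<in>{i..<Suc j}. (1/2) ^ k)"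
      using B_near by (intro sum_mono less_imp_le)
    also have "\<dots> \<le> 2 * (1/2) ^ i"
      by (rule sum_half_powers_le)
    finally show ?thesis .
  qed
  have to_zero: "(\<lambda>i. 2 * (1/2::real) ^ i) \<longlonglongrightarrow> 0"
    by (intro tendsto_mult_right_zero LIMSEQ_power_zero) simp
  have "net_tendsto (\<lambda>i j. dd (Ujoin B i j) A) 0"
    using row_bound dd_nonneg by (intro net_tendsto_by_row_bound[OF _ to_zero]) simp
  moreover have "net_tendsto (\<lambda>i j. nu_plus (Ujoin B i j)) (nu_plus A)"
    using abs_nu_plus_diff_le_dd row_bound
    by (intro net_tendsto_by_row_bound[OF _ to_zero]) (meson order_trans)
  moreover have "net_tendsto (\<lambda>i j. nu_minus (Ujoin B i j)) (nu_plus A)"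
    using abs_nu_minus_diff_le_dd row_bound \<open>A \<in> Dens\<close>
    by (intro net_tendsto_by_row_bound[OF _ to_zero])
      (metis Dens_iff_nu_minus_eq_nu_plus order_trans)
  ultimately obtain B' where "cls B' \<in> E" and "dd A B' = 0"
    using limit[of B] BE net_tendsto_dd_unique by blast
  then show "cls A \<in> E"
    by (simp add: cls_eqI)
qed

theorem theorem1p2:
  fixes E :: "nat set set set"
  assumes "E \<subseteq> Dquot"
  shows "closed_Dd E \<longleftrightarrow>
    (\<forall>A :: nat \<Rightarrow> nat set. (\<forall>i. cls (A i) \<in> E) \<longrightarrow>
      (\<forall>L. net_tendsto (\<lambda>i j. nu_plus (Ujoin A i j)) L \<and>
           net_tendsto (\<lambda>i j. nu_minus (Ujoin A i j)) L \<longrightarrow>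
           (\<exists>B. cls B \<in> E \<and> nu_plus B = L \<and>
                net_tendsto (\<lambda>i j. dd (Ujoin A i j) B) 0)))"
  using closed_imp_Ujoin_limit[of E] Ujoin_limit_imp_closed[of E] by blast

end
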